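(* Consider the single-node stochastic clearing problem described in the context, with positive incremental bid prices. Let $(d_j^*,g_i^*,D_j^*(\cdot),G_i^*(\cdot))$ be an optimal solution with associated prices $(\pi^*,\Pi^*(\cdot))$. Then the expected uplift payments are zero: $\mathcal{M}_i^U=0$ for all $i\in\mathcal{G}$ and $\mathcal{M}_j^U=0$ for all $j\in\mathcal{D}$.
   Context: Finite nonempty sets of suppliers $\mathcal{G}$ and consumers $\mathcal{D}$; a finite scenario set $\Omega$ with probabilities $p(\omega)>0$, $\sum_\omega p(\omega)=1$, $\mathbb{E}[Y(\omega)]=\sum_\omega p(\omega)Y(\omega)$. Data: bid prices $\alpha_i^g,\alpha_j^d\ge 0$, incremental bid prices $\Delta\alpha_i^{g,\pm},\Delta\alpha_j^{d,\pm}$, real-time capacities $\bar G_i(\omega),\bar D_j(\omega)\ge 0$. $(x)_+=\max\{x,0\}$, $(x)_-=\max\{-x,0\}$. Cost functions: $C_i^g(\omega)=\alpha_i^gG_i(\omega)+\Delta\alpha_i^{g,+}(G_i(\omega)-g_i)_++\Delta\alpha_i^{g,-}(G_i(\omega)-g_i)_-$ and $C_j^d(\omega)=-\alpha_j^dD_j(\omega)+\Delta\alpha_j^{d,+}(D_j(\omega)-d_j)_-+\Delta\alpha_j^{d,-}(D_j(\omega)-d_j)_+$. The single-node problem: minimize $\sum_i\mathbb{E}[C_i^g(\omega)]+\sum_j\mathbb{E}[C_j^d(\omega)]$ over free $g_i,d_j\in\mathbb{R}$ and real-time $G_i(\omega),D_j(\omega)$ subject to $\sum_i g_i=\sum_j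 d_j$ (multiplier $\pi$), $\sum_i(G_i(\omega)-g_i)=\sum_j(D_j(\omega)-d_j)$ for each $\omega$ (multiplier $p(\omega)\Pi(\omega)$), $0\le G_i(\omega)\le\bar G_i(\omega)$, $0\le D_j(\omega)\le\bar D_j(\omega)$. "Optimal solution with associated prices $(\pi^*,\Pi^* )$" means the solution minimizes the partial Lagrange function $\text{objective}-\pi^*(\sum_ig_i-\sum_jd_j)-\mathbb{E}[\Pi^*(\omega)(\sum_i(G_i(\omega)-g_i)-\sum_j(D_j(\omega)-d_j))]$ over all free $g_i,d_j$ and all $G_i(\cdot),D_j(\cdot)$ satisfying the bound constraints. Payments (evaluated at the solution and prices): $P_i^g(\omega)=g_i\pi+(G_i(\omega)-g_i)\Pi(\omega)$, $P_j^d(\omega)=-d_j\pi-(D_j(\omega)-d_j)\Pi(\omega)$. Expected uplifts: $\mathcal{M}_i^U:=-\min\{\mathbb{E}[P_i^g(\omega)]-\mathbb{E}[C_i^g(\omega)],0\}$ and $\mathcal{M}_j^U:=-\min\{\mathbb{E}[P_j^d(\omega)]-\mathbb{E}[C_j^d(\omega)],0\}$. *)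

theory Defs
  imports Complex_Main
begin

definition pos_part :: "real \<Rightarrow> real" where "pos_part x = max x 0"
definition neg_part :: "real \<Rightarrow> real" where "neg_part x = max (- x) 0"

definition expect :: "'w set \<Rightarrow> ('w \<Rightarrow> real) \<Rightarrow> ('w \<Rightarrow> real) \<Rightarrow> real" where
  "expect Omega p Y = (\<Sum>w\<in>Omega. p w * Y w)"

record ('g, 'd, 'w) market =
  Gs :: "'g set"
  Ds :: "'d set"
  Om :: "'w set"
  prob :: "'w \<Rightarrow> real"
  alpha_g :: "'g \<Rightarrow> real"
  alpha_d :: "'d \<Rightarrow> real"
  dalpha_gp :: "'g \<Rightarrow> real"
  dalpha_gm :: "'g \<Rightarrow> real"
  dalpha_dp :: "'d \<Rightarrow> real"
  dalpha_dm :: "'d \<Rightarrow> real"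
  Gbar :: "'g \<Rightarrow> 'w \<Rightarrow> real"
  Dbar :: "'d \<Rightarrow> 'w \<Rightarrow> real"

definition well_formed_market :: "('g, 'd, 'w) market \<Rightarrow> bool" where
  "well_formed_market M \<longleftrightarrow>
     finite (Gs M) \<and> Gs M \<noteq> {} \<and> finite (Ds M) \<and> Ds M \<noteq> {} \<and>
     finite (Om M) \<and> Om M \<noteq> {} \<and>
     (\<forall>w\<in>Om M. prob M w > 0) \<and> (\<Sum>w\<in>Om M. prob M w) = 1 \<and>
     (\<forall>i\<in>Gs M. alpha_g M i \<ge> 0) \<and> (\<forall>j\<in>Ds M. alpha_d M j \<ge> 0) \<and>
     (\<forall>i\<in>Gs M. \<forall>w\<in>Om M. Gbar M i w \<ge> 0) \<and>
     (\<forall>j\<in>Ds M. \<forall>w\<in>Om M. Dbar M j w \<ge> 0)"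

definition cost_g :: "('g, 'd, 'w) market \<Rightarrow> 'g \<Rightarrow> real \<Rightarrow> ('w \<Rightarrow> real) \<Rightarrow> 'w \<Rightarrow> real" where
  "cost_g M i gi Gi w = alpha_g M i * Gi w + dalpha_gp M i * pos_part (Gi w - gi)
       + dalpha_gm M i * neg_part (Gi w - gi)"

definition cost_d :: "('g, 'd, 'w) market \<Rightarrow> 'd \<Rightarrow> real \<Rightarrow> ('w \<Rightarrow> real) \<Rightarrow> 'w \<Rightarrow> real" where
  "cost_d M j dj Dj w = - alpha_d M j * Dj w + dalpha_dp M j * neg_part (Dj w - dj)
       + dalpha_dm M j * pos_part (Dj w - dj)"

definition objective :: "('g, 'd, 'w) market \<Rightarrow> ('g \<Rightarrow> real) \<Rightarrow> ('d \<Rightarrow> real)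
    \<Rightarrow> ('g \<Rightarrow> 'w \<Rightarrow> real) \<Rightarrow> ('d \<Rightarrow> 'w \<Rightarrow> real) \<Rightarrow> real" where
  "objective M g d G D =
     (\<Sum>i\<in>Gs M. expect (Om M) (prob M) (cost_g M i (g i) (G i)))
   + (\<Sum>j\<in>Ds M. expect (Om M) (prob M) (cost_d M j (d j) (D j)))"

definition bounds_ok :: "('g, 'd, 'w) market \<Rightarrow> ('g \<Rightarrow> 'w \<Rightarrow> real) \<Rightarrow> ('d \<Rightarrow> 'w \<Rightarrow> real) \<Rightarrow> bool" where
  "bounds_ok M G D \<longleftrightarrow>
     (\<forall>i\<in>Gs M. \<forall>w\<in>Om M. 0 \<le> G i w \<and> G i w \<le> Gbar M i w) \<and>
     (\<forall>j\<in>Ds M. \<forall>w\<in>Om M. 0 \<le> D j w \<and> D j w \<le> Dbar M j w)"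

definition feasible :: "('g, 'd, 'w) market \<Rightarrow> ('g \<Rightarrow> real) \<Rightarrow> ('d \<Rightarrow> real)
    \<Rightarrow> ('g \<Rightarrow> 'w \<Rightarrow> real) \<Rightarrow> ('d \<Rightarrow> 'w \<Rightarrow> real) \<Rightarrow> bool" where
  "feasible M g d G D \<longleftrightarrow>
     (\<Sum>i\<in>Gs M. g i) = (\<Sum>j\<in>Ds M. d j) \<and>
     (\<forall>w\<in>Om M. (\<Sum>i\<in>Gs M. G i w - g i) = (\<Sum>j\<in>Ds M. D j w - d j)) \<and>
     bounds_ok M G D"

definition lagrangian :: "('g, 'd, 'w) market \<Rightarrow> real \<Rightarrow> ('w \<Rightarrow> real) \<Rightarrow> ('g \<Rightarrow> real) \<Rightarrow> ('d \<Rightarrow> real)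
    \<Rightarrow> ('g \<Rightarrow> 'w \<Rightarrow> real) \<Rightarrow> ('d \<Rightarrow> 'w \<Rightarrow> real) \<Rightarrow> real" where
  "lagrangian M pr Pi g d G D =
     objective M g d G D - pr * ((\<Sum>i\<in>Gs M. g i) - (\<Sum>j\<in>Ds M. d j))
     - expect (Om M) (prob M)
         (\<lambda>w. Pi w * ((\<Sum>i\<in>Gs M. G i w - g i) - (\<Sum>j\<in>Ds M. D j w - d j)))"

definition optimal_with_prices :: "('g, 'd, 'w) market \<Rightarrow> ('g \<Rightarrow> real) \<Rightarrow> ('d \<Rightarrow> real)
    \<Rightarrow> ('g \<Rightarrow> 'w \<Rightarrow> real) \<Rightarrow> ('d \<Rightarrow> 'w \<Rightarrow> real) \<Rightarrow> real \<Rightarrow> ('w \<Rightarrow> real) \<Rightarrow> bool" where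
  "optimal_with_prices M g d G D pr Pi \<longleftrightarrow>
     feasible M g d G D \<and>
     (\<forall>g' d' G' D'. bounds_ok M G' D' \<longrightarrow>
        lagrangian M pr Pi g d G D \<le> lagrangian M pr Pi g' d' G' D')"

definition pay_g :: "real \<Rightarrow> ('w \<Rightarrow> real) \<Rightarrow> real \<Rightarrow> ('w \<Rightarrow> real) \<Rightarrow> 'w \<Rightarrow> real" where
  "pay_g pr Pi gi Gi w = gi * pr + (Gi w - gi) * Pi w"

definition pay_d :: "real \<Rightarrow> ('w \<Rightarrow> real) \<Rightarrow> real \<Rightarrow> ('w \<Rightarrow> real) \<Rightarrow> 'w \<Rightarrow> real" where
  "pay_d pr Pi dj Dj w = - dj * pr - (Dj w - dj) * Pi w"

definition uplift_g :: "('g, 'd, 'w) market \<Rightarrow> real \<Rightarrow> ('w \<Rightarrow> real) \<Rightarrow> 'g \<Rightarrow> real \<Rightarrow> ('w \<Rightarrow> real) \<Rightarrow> real" where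
  "uplift_g M pr Pi i gi Gi =
     - min (expect (Om M) (prob M) (pay_g pr Pi gi Gi) - expect (Om M) (prob M) (cost_g M i gi Gi)) 0"

definition uplift_d :: "('g, 'd, 'w) market \<Rightarrow> real \<Rightarrow> ('w \<Rightarrow> real) \<Rightarrow> 'd \<Rightarrow> real \<Rightarrow> ('w \<Rightarrow> real) \<Rightarrow> real" where
  "uplift_d M pr Pi j dj Dj =
     - min (expect (Om M) (prob M) (pay_d pr Pi dj Dj) - expect (Om M) (prob M) (cost_d M j dj Dj)) 0"

end

theory Submission
  imports Defs
begin

text \<open>The partial Lagrangian equals the sum over all participants of expected cost minus expected
  payment, because the price terms of the Lagrangian are exactly the total expected payment.
  Each summand depends only on that participant's own decisions, and the zero schedule
  (no day-ahead position, no real-time quantity) satisfies every bound constraint and has net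
  cost zero. Hence, at a Lagrangian minimizer, every participant's expected net cost is
  nonpositive, i.e. expected payments cover expected costs and no uplift is due.\<close>

definition net_cost_g :: "('g, 'd, 'w) market \<Rightarrow> real \<Rightarrow> ('w \<Rightarrow> real) \<Rightarrow> 'g \<Rightarrow> real \<Rightarrow> ('w \<Rightarrow> real) \<Rightarrow> real" where
  "net_cost_g M pr Pi i gi Gi =
     expect (Om M) (prob M) (cost_g M i gi Gi) - expect (Om M) (prob M) (pay_g pr Pi gi Gi)"

definition net_cost_d :: "('g, 'd, 'w) market \<Rightarrow> real \<Rightarrow> ('w \<Rightarrow> real) \<Rightarrow> 'd \<Rightarrow> real \<Rightarrow> ('w \<Rightarrow> real) \<Rightarrow> real" where
  "net_cost_d M pr Pi j dj Dj =
     expect (Om M) (prob M) (cost_d M j dj Dj) - expect (Om M) (prob M) (pay_d pr Pi dj Dj)"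

lemma uplift_g_eq_pos_part: "uplift_g M pr Pi i gi Gi = pos_part (net_cost_g M pr Pi i gi Gi)"
  unfolding uplift_g_def net_cost_g_def pos_part_def by linarith

lemma uplift_d_eq_pos_part: "uplift_d M pr Pi j dj Dj = pos_part (net_cost_d M pr Pi j dj Dj)"
  unfolding uplift_d_def net_cost_d_def pos_part_def by linarith

lemma net_cost_g_zero: "net_cost_g M pr Pi i 0 (\<lambda>w. 0) = 0"
  unfolding net_cost_g_def expect_def cost_g_def pay_g_def pos_part_def neg_part_def by simp

lemma net_cost_d_zero: "net_cost_d M pr Pi j 0 (\<lambda>w. 0) = 0"
  unfolding net_cost_d_def expect_def cost_d_def pay_d_def pos_part_def neg_part_def by simp

lemma expect_const:
  assumes "(\<Sum>w\<in>Omega. p w) = 1"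
  shows "expect Omega p (\<lambda>w. c) = c"
  using assms by (simp add: expect_def flip: sum_distrib_right)

lemma expect_add: "expect Omega p (\<lambda>w. X w + Y w) = expect Omega p X + expect Omega p Y"
  by (simp add: expect_def distrib_left sum.distrib)

lemma expect_diff: "expect Omega p (\<lambda>w. X w - Y w) = expect Omega p X - expect Omega p Y"
  by (simp add: expect_def right_diff_distrib sum_subtractf)

lemma expect_sum: "expect Omega p (\<lambda>w. \<Sum>k\<in>K. X k w) = (\<Sum>k\<in>K. expect Omega p (X k))"
  by (simp add: expect_def sum_distrib_left sum.swap[of _ Omega])

lemma expect_pay_g:
  assumes "(\<Sum>w\<in>Omega. p w) = 1"
  shows "expect Omega p (pay_g pr Pi gi Gi) = gi * pr + expect Omega p (\<lambda>w. Pi w * (Gi w - gi))"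
proof -
  have "pay_g pr Pi gi Gi = (\<lambda>w. gi * pr + Pi w * (Gi w - gi))"
    by (simp add: fun_eq_iff pay_g_def mult.commute)
  then show ?thesis
    by (simp add: expect_add expect_const[OF assms])
qed

lemma expect_pay_d:
  assumes "(\<Sum>w\<in>Omega. p w) = 1"
  shows "expect Omega p (pay_d pr Pi dj Dj) = - dj * pr - expect Omega p (\<lambda>w. Pi w * (Dj w - dj))"
proof -
  have "pay_d pr Pi dj Dj = (\<lambda>w. - dj * pr - Pi w * (Dj w - dj))"
    by (simp add: fun_eq_iff pay_d_def mult.commute)
  then show ?thesis
    by (simp add: expect_diff expect_const[OF assms])
qed

lemma lagrangian_eq_sum_net_costs:
  assumes "(\<Sum>w\<in>Om M. prob M w) = 1"
  shows "lagrangian M pr Pi g d G D =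
    (\<Sum>i\<in>Gs M. net_cost_g M pr Pi i (g i) (G i)) + (\<Sum>j\<in>Ds M. net_cost_d M pr Pi j (d j) (D j))"
proof -
  let ?E = "expect (Om M) (prob M)"
  have price_term: "?E (\<lambda>w. Pi w * ((\<Sum>i\<in>Gs M. G i w - g i) - (\<Sum>j\<in>Ds M. D j w - d j)))
      = (\<Sum>i\<in>Gs M. ?E (\<lambda>w. Pi w * (G i w - g i))) - (\<Sum>j\<in>Ds M. ?E (\<lambda>w. Pi w * (D j w - d j)))"
    by (simp add: right_diff_distrib sum_distrib_left expect_diff expect_sum)
  show ?thesis
    unfolding lagrangian_def objective_def net_cost_g_def net_cost_d_def price_term
      expect_pay_g[OF assms] expect_pay_d[OF assms]
    by (simp add: sum_subtractf sum.distrib sum_distrib_left algebra_simps)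
qed

lemma sum_le_update_imp_le:
  fixes f h :: "'a \<Rightarrow> 'b::ordered_ab_group_add"
  assumes "finite A" "i \<in> A"
    and "(\<Sum>k\<in>A. f k) \<le> (\<Sum>k\<in>A. h k)"
    and "\<And>k. k \<in> A \<Longrightarrow> k \<noteq> i \<Longrightarrow> h k = f k"
  shows "f i \<le> h i"
proof -
  have "(\<Sum>k\<in>A - {i}. h k) = (\<Sum>k\<in>A - {i}. f k)"
    using assms(4) by (intro sum.cong) auto
  then show ?thesis
    using assms(3) by (simp add: sum.remove[OF assms(1,2)])
qed

lemma optimal_net_cost_g_nonpos:
  assumes "well_formed_market M" "optimal_with_prices M g d G D pr Pi" "i \<in> Gs M"
  shows "net_cost_g M pr Pi i (g i) (G i) \<le> 0"
proof -
  have wf: "finite (Gs M)" "(\<Sum>w\<in>Om M. prob M w) = 1" "\<forall>w\<in>Om M. Gbar M i w \<ge> 0"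
    using assms(1,3) unfolding well_formed_market_def by auto
  have "bounds_ok M (G(i := (\<lambda>w. 0))) D"
    using assms(2) wf(3) unfolding optimal_with_prices_def feasible_def bounds_ok_def by auto
  then have "lagrangian M pr Pi g d G D \<le> lagrangian M pr Pi (g(i := 0)) d (G(i := (\<lambda>w. 0))) D"
    using assms(2) unfolding optimal_with_prices_def by blast
  then have "(\<Sum>k\<in>Gs M. net_cost_g M pr Pi k (g k) (G k))
      \<le> (\<Sum>k\<in>Gs M. net_cost_g M pr Pi k ((g(i := 0)) k) ((G(i := (\<lambda>w. 0))) k))"
    by (simp add: lagrangian_eq_sum_net_costs[OF wf(2)])
  then have "net_cost_g M pr Pi i (g i) (G i) \<le> net_cost_g M pr Pi i ((g(i := 0)) i) ((G(i := (\<lambda>w. 0))) i)"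
    by (rule sum_le_update_imp_le[OF wf(1) assms(3)]) simp
  then show ?thesis
    by (simp add: net_cost_g_zero)
qed

lemma optimal_net_cost_d_nonpos:
  assumes "well_formed_market M" "optimal_with_prices M g d G D pr Pi" "j \<in> Ds M"
  shows "net_cost_d M pr Pi j (d j) (D j) \<le> 0"
proof -
  have wf: "finite (Ds M)" "(\<Sum>w\<in>Om M. prob M w) = 1" "\<forall>w\<in>Om M. Dbar M j w \<ge> 0"
    using assms(1,3) unfolding well_formed_market_def by auto
  have "bounds_ok M G (D(j := (\<lambda>w. 0)))"
    using assms(2) wf(3) unfolding optimal_with_prices_def feasible_def bounds_ok_def by auto
  then have "lagrangian M pr Pi g d G D \<le> lagrangian M pr Pi g (d(j := 0)) G (D(j := (\<lambda>w. 0)))"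
    using assms(2) unfolding optimal_with_prices_def by blast
  then have "(\<Sum>k\<in>Ds M. net_cost_d M pr Pi k (d k) (D k))
      \<le> (\<Sum>k\<in>Ds M. net_cost_d M pr Pi k ((d(j := 0)) k) ((D(j := (\<lambda>w. 0))) k))"
    by (simp add: lagrangian_eq_sum_net_costs[OF wf(2)])
  then have "net_cost_d M pr Pi j (d j) (D j) \<le> net_cost_d M pr Pi j ((d(j := 0)) j) ((D(j := (\<lambda>w. 0))) j)"
    by (rule sum_le_update_imp_le[OF wf(1) assms(3)]) simp
  then show ?thesis
    by (simp add: net_cost_d_zero)
qed

theorem theorem5:
  fixes M :: "('g, 'd, 'w) market"
    and g :: "'g \<Rightarrow> real" and d :: "'d \<Rightarrow> real"
    and G :: "'g \<Rightarrow> 'w \<Rightarrow> real" and D :: "'d \<Rightarrow> 'w \<Rightarrow> real"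
    and pr :: real and Pi :: "'w \<Rightarrow> real"
  assumes "well_formed_market M"
    and "\<forall>i\<in>Gs M. dalpha_gp M i > 0 \<and> dalpha_gm M i > 0"
    and "\<forall>j\<in>Ds M. dalpha_dp M j > 0 \<and> dalpha_dm M j > 0"
    and "optimal_with_prices M g d G D pr Pi"
  shows "(\<forall>i\<in>Gs M. uplift_g M pr Pi i (g i) (G i) = 0) \<and>
         (\<forall>j\<in>Ds M. uplift_d M pr Pi j (d j) (D j) = 0)"
  using optimal_net_cost_g_nonpos[OF assms(1,4)] optimal_net_cost_d_nonpos[OF assms(1,4)]
  by (simp add: uplift_g_eq_pos_part uplift_d_eq_pos_part pos_part_def)

end
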